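(* In the single-node deterministic selection process described in the context, for every $\tau\ge1$, $$\big|V^*(i)-\mathbb{E}[V_\tau(i)]\big|\le\frac{c_4}{\tau^{c_5}},\qquad c_4=(b-1)\Big(\Big(\frac{c_1}{\Delta_{\min}(i)}\Big)^{1/c_2}+1\Big),\quad c_5=1-\frac{c_3}{c_2}.$$
   Context: Fix constants $c_1>0$ and $0<c_3<c_2$. A node $i$ has a finite set $C(i)$ of $b\ge2$ children; each child $j$ has a deterministic value $Q^*(j)\in[0,1]$, and there is a unique maximizer $j^*=\arg\max_{j\in C(i)}Q^*(j)$. Set $V^*(i)=Q^*(j^* )$, $\Delta(j)=Q^*(j^* )-Q^*(j)$ and $\Delta_{\min}(i)=\min_{j\neq j^*}\Delta(j)>0$. The node is visited at times $s=1,2,\dots$; at visit $s$ one child $\mu(s)$ is selected and yields value $Q^*(\mu(s))$. Let $T(i,s)=s-1$ be the number of previous visits to $i$ and $T(j,s)$ the number of previous selections of $j$ (before visit $s$). Selection rule: if some child has $T(j,s)=0$, select one such child (chosen at random); otherwise select a maximizer of $Q^*(j)+c_1\,T(i,s)^{c_3}/T(j,s)^{c_2}$, ties broken at random. After $\tau$ visits, $T_\tau(j)$ denotes the number of selections of $j$ among visits $1,\dots,\tau$, and $V_\tau(i)=\frac1\tau\sum_{s=1}^{\tau}Q^*(\mu(s))$ is the average value of node $i$. *)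

theory Defs
  imports "HOL-Probability.Probability"
begin

text \<open>A run of the selection process at node i over tau visits is the list of selected
children mu(1),...,mu(tau) (0-indexed here: visit s+1 is position s).
Before visit s+1, T(i,s+1) = s and T(j,s+1) = number of occurrences of j in the first s entries.\<close>

definition prev_count :: "'a list \<Rightarrow> nat \<Rightarrow> 'a \<Rightarrow> nat" where
  "prev_count mu s j = count_list (take s mu) j"

definition ucb_score :: "real \<Rightarrow> real \<Rightarrow> real \<Rightarrow> ('a \<Rightarrow> real) \<Rightarrow> 'a list \<Rightarrow> nat \<Rightarrow> 'a \<Rightarrow> real" where
  "ucb_score c1 c2 c3 Q mu s j =
     Q j + c1 * (real s) powr c3 / (real (prev_count mu s j)) powr c2"

text \<open>Admissible run: every selection obeys the selection rule (ties / choice among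
unvisited children may be resolved arbitrarily).\<close>
definition admissible_run ::
  "real \<Rightarrow> real \<Rightarrow> real \<Rightarrow> 'a set \<Rightarrow> ('a \<Rightarrow> real) \<Rightarrow> nat \<Rightarrow> 'a list \<Rightarrow> bool" where
  "admissible_run c1 c2 c3 C Q tau mu \<longleftrightarrow>
     length mu = tau \<and>
     (\<forall>s<tau. mu ! s \<in> C \<and>
        ((\<exists>j\<in>C. prev_count mu s j = 0) \<longrightarrow> prev_count mu s (mu ! s) = 0) \<and>
        ((\<forall>j\<in>C. prev_count mu s j \<noteq> 0) \<longrightarrow>
           (\<forall>j\<in>C. ucb_score c1 c2 c3 Q mu s j \<le> ucb_score c1 c2 c3 Q mu s (mu ! s))))"

definition avg_value :: "('a \<Rightarrow> real) \<Rightarrow> nat \<Rightarrow> 'a list \<Rightarrow> real" where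
  "avg_value Q tau mu = (1 / real tau) * (\<Sum>s<tau. Q (mu ! s))"

definition Delta_min :: "'a set \<Rightarrow> ('a \<Rightarrow> real) \<Rightarrow> 'a \<Rightarrow> real" where
  "Delta_min C Q jstar = Min ((\<lambda>j. Q jstar - Q j) ` (C - {jstar}))"

end

theory Submission
  imports Defs
begin

text \<open>Once every child has been tried, selecting a suboptimal child j with gap at least D at
visit s+1 means its exploration bonus c1 s^c3 / n^c2 covers the gap, so its count n is at most
(c1/D)^(1/c2) s^(c3/c2). Hence each of the b-1 suboptimal children is chosen at most
(c1/D)^(1/c2) tau^(c3/c2) + 1 times in tau visits; every such visit loses at most 1 in value and
all others lose nothing, which bounds the regret per run and therefore in expectation.\<close>

lemma Delta_min_pos:
  assumes "finite C" "C - {jstar} \<noteq> {}" "\<forall>j\<in>C. j \<noteq> jstar \<longrightarrow> Q j < Q jstar"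
  shows "Delta_min C Q jstar > 0"
  unfolding Delta_min_def using assms by (subst Min_gr_iff) auto

lemma Delta_min_le:
  assumes "finite C" "j \<in> C" "j \<noteq> jstar"
  shows "Delta_min C Q jstar \<le> Q jstar - Q j"
  unfolding Delta_min_def using assms by (intro Min_le) auto

lemma admissible_run_selection:
  assumes "admissible_run c1 c2 c3 C Q tau mu" "s < tau"
  shows "\<forall>j\<in>C. prev_count mu s j \<noteq> 0 \<Longrightarrow> j \<in> C \<Longrightarrow>
           ucb_score c1 c2 c3 Q mu s j \<le> ucb_score c1 c2 c3 Q mu s (mu ! s)"
    and "prev_count mu s (mu ! s) \<noteq> 0 \<Longrightarrow> \<forall>j\<in>C. prev_count mu s j \<noteq> 0"
  using assms by (auto simp: admissible_run_def)

lemma selected_suboptimal_count_le: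
  assumes adm: "admissible_run c1 c2 c3 C Q tau mu" and s: "s < tau"
    and c1: "c1 > 0" and c2: "c2 > 0"
    and jstar: "jstar \<in> C" and sel: "mu ! s = j"
    and tried: "prev_count mu s j \<noteq> 0"
    and D: "D > 0" "D \<le> Q jstar - Q j"
  shows "real (prev_count mu s j) \<le> (c1 / D) powr (1 / c2) * real s powr (c3 / c2)"
proof -
  define n where "n = real (prev_count mu s j)"
  have n_pos: "n > 0" using tried by (simp add: n_def)
  have "\<forall>j\<in>C. prev_count mu s j \<noteq> 0"
    using admissible_run_selection(2)[OF adm s] tried sel by simp
  then have "ucb_score c1 c2 c3 Q mu s jstar \<le> ucb_score c1 c2 c3 Q mu s j"
    using admissible_run_selection(1)[OF adm s] jstar sel by blast
  moreover have "0 \<le> c1 * real s powr c3 / real (prev_count mu s jstar) powr c2"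
    using c1 by simp
  ultimately have "D \<le> c1 * real s powr c3 / n powr c2"
    using D by (simp add: ucb_score_def n_def)
  then have bonus: "n powr c2 \<le> (c1 / D) * real s powr c3"
    using n_pos D by (simp add: field_simps)
  have "n = (n powr c2) powr (1 / c2)" using c2 n_pos by (simp add: powr_powr)
  also have "\<dots> \<le> ((c1 / D) * real s powr c3) powr (1 / c2)"
    using bonus c2 by (intro powr_mono2) auto
  also have "\<dots> = (c1 / D) powr (1 / c2) * real s powr (c3 / c2)"
    using c1 D by (subst powr_mult) (auto simp: powr_powr)
  finally show ?thesis by (simp add: n_def)
qed

lemma suboptimal_count_le:
  assumes adm: "admissible_run c1 c2 c3 C Q tau mu"
    and c1: "c1 > 0" and c23: "0 \<le> c3" "0 < c2"
    and jstar: "jstar \<in> C" and D: "D > 0" "D \<le> Q jstar - Q j"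
    and t: "t \<le> tau"
  shows "real (count_list (take t mu) j) \<le> (c1 / D) powr (1 / c2) * real t powr (c3 / c2) + 1"
  using t
proof (induction t)
  case 0
  then show ?case by simp
next
  case (Suc t)
  let ?K = "(c1 / D) powr (1 / c2)"
  have s: "t < tau" using Suc by simp
  have "length mu = tau" using adm by (simp add: admissible_run_def)
  then have take_Suc: "take (Suc t) mu = take t mu @ [mu ! t]"
    using s by (simp add: take_Suc_conv_app_nth)
  have mono: "?K * real t powr (c3 / c2) \<le> ?K * real (Suc t) powr (c3 / c2)"
    using c23 by (intro mult_left_mono powr_mono2) auto
  consider "mu ! t \<noteq> j" | "mu ! t = j" "prev_count mu t j = 0"
    | "mu ! t = j" "prev_count mu t j \<noteq> 0" by blast
  then show ?case
  proof cases
    case 1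
    then show ?thesis using Suc mono take_Suc by simp
  next
    case 2
    then show ?thesis using take_Suc by (simp add: prev_count_def)
  next
    case 3
    then have "real (prev_count mu t j) \<le> ?K * real t powr (c3 / c2)"
      using selected_suboptimal_count_le[OF adm s c1 c23(2) jstar _ _ D] by blast
    then show ?thesis using 3 mono take_Suc by (simp add: prev_count_def)
  qed
qed

lemma regret_le_suboptimal_counts:
  assumes "set mu \<subseteq> C" "finite C" "jstar \<in> C"
    and "\<forall>j\<in>C. 0 \<le> Q j \<and> Q j \<le> 1" "\<forall>j\<in>C. Q j \<le> Q jstar"
  shows "(\<Sum>x\<leftarrow>mu. Q jstar - Q x) \<le> (\<Sum>j\<in>C - {jstar}. real (count_list mu j))"
  using assms(1)
proof (induction mu)
  case Nil
  then show ?case by simp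
next
  case (Cons x mu)
  have "x \<in> C" using Cons.prems by simp
  moreover have "0 \<le> Q x" "Q jstar \<le> 1" "Q x \<le> Q jstar"
    using assms(3-5) \<open>x \<in> C\<close> by auto
  ultimately have "Q jstar - Q x \<le> (if x = jstar then 0 else 1)" by simp
  also have "\<dots> = (\<Sum>j\<in>C - {jstar}. if x = j then 1 else 0)"
    using \<open>x \<in> C\<close> assms(2) by simp
  finally have "Q jstar - Q x \<le> (\<Sum>j\<in>C - {jstar}. if x = j then 1 else 0)" .
  moreover have "(\<Sum>j\<in>C - {jstar}. real (count_list (x # mu) j))
      = (\<Sum>j\<in>C - {jstar}. if x = j then 1 else 0) + (\<Sum>j\<in>C - {jstar}. real (count_list mu j))"
    by (auto simp: sum.distrib[symmetric] split: if_splits intro!: sum.cong)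
  ultimately show ?case using Cons by simp
qed

lemma admissible_run_regret_bounds:
  assumes adm: "admissible_run c1 c2 c3 C Q tau mu"
    and c1: "c1 > 0" and c23: "0 < c3" "c3 < c2"
    and finC: "finite C" and b2: "card C \<ge> 2"
    and Qrange: "\<forall>j\<in>C. 0 \<le> Q j \<and> Q j \<le> 1"
    and jstar: "jstar \<in> C" "\<forall>j\<in>C. j \<noteq> jstar \<longrightarrow> Q j < Q jstar"
    and tau: "tau \<ge> 1"
  defines "B \<equiv> (real (card C) - 1) * ((c1 / Delta_min C Q jstar) powr (1 / c2) + 1)
                 / (real tau) powr (1 - c3 / c2)"
  shows "0 \<le> Q jstar - avg_value Q tau mu" and "Q jstar - avg_value Q tau mu \<le> B"
proof -
  define K where "K = (c1 / Delta_min C Q jstar) powr (1 / c2)"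
  have len: "length mu = tau" and set_mu: "set mu \<subseteq> C"
    using adm by (auto simp: admissible_run_def in_set_conv_nth)
  have "C - {jstar} \<noteq> {}"
  proof
    assume "C - {jstar} = {}"
    then have "card C \<le> card {jstar}" using finC by (intro card_mono) auto
    then show False using b2 by simp
  qed
  then have Dpos: "Delta_min C Q jstar > 0" by (rule Delta_min_pos[OF finC _ jstar(2)])
  have Qle: "\<forall>j\<in>C. Q j \<le> Q jstar" using jstar(2) by force
  have tau_pos: "real tau > 0" using tau by simp
  have regret: "Q jstar - avg_value Q tau mu = (\<Sum>x\<leftarrow>mu. Q jstar - Q x) / real tau"
    using tau_pos len
    by (simp add: avg_value_def sum_list_sum_nth sum_subtractf atLeast0LessThan field_simps)
  have "0 \<le> (\<Sum>x\<leftarrow>mu. Q jstar - Q x)"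
    using set_mu Qle by (intro sum_list_nonneg) auto
  then show "0 \<le> Q jstar - avg_value Q tau mu" using regret by simp
  have count_le: "real (count_list mu j) \<le> K * real tau powr (c3 / c2) + 1"
    if "j \<in> C - {jstar}" for j
    using suboptimal_count_le[OF adm c1 _ _ jstar(1) Dpos Delta_min_le[OF finC, of j jstar Q],
        of tau] that c23 len unfolding K_def by auto
  have "(\<Sum>x\<leftarrow>mu. Q jstar - Q x) \<le> (\<Sum>j\<in>C - {jstar}. real (count_list mu j))"
    using regret_le_suboptimal_counts[OF set_mu finC jstar(1) Qrange Qle] .
  also have "\<dots> \<le> real (card (C - {jstar})) * (K * real tau powr (c3 / c2) + 1)"
    by (rule sum_bounded_above[OF count_le])
  also have "\<dots> = (real (card C) - 1) * (K * real tau powr (c3 / c2) + 1)"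
    using finC jstar(1) b2 by (simp add: card_Diff_singleton of_nat_diff)
  also have "\<dots> \<le> (real (card C) - 1) * ((K + 1) * real tau powr (c3 / c2))"
    using tau c23 b2 by (intro mult_left_mono) (auto simp: algebra_simps K_def ge_one_powr_ge_zero)
  finally show "Q jstar - avg_value Q tau mu \<le> B"
    using regret tau_pos unfolding B_def K_def by (simp add: powr_diff field_simps)
qed

lemma pmf_expectation_between:
  fixes f :: "'a \<Rightarrow> real"
  assumes "\<forall>x\<in>set_pmf p. a \<le> f x \<and> f x \<le> b"
  shows "a \<le> measure_pmf.expectation p f \<and> measure_pmf.expectation p f \<le> b"
proof -
  have "integrable (measure_pmf p) f"
    by (rule measure_pmf.integrable_const_bound[where B = "\<bar>a\<bar> + \<bar>b\<bar>"])
       (use assms in \<open>auto simp: AE_measure_pmf_iff\<close>)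
  then show ?thesis using assms
    by (auto simp: AE_measure_pmf_iff intro!: measure_pmf.integral_le_const
        measure_pmf.integral_ge_const)
qed

theorem lemma7:
  fixes c1 c2 c3 :: real and C :: "'a set" and Q :: "'a \<Rightarrow> real" and jstar :: 'a
    and tau :: nat and p :: "'a list pmf"
  assumes c1: "c1 > 0" and c23: "0 < c3" "c3 < c2"
    and finC: "finite C" and b2: "card C \<ge> 2"
    and Qrange: "\<forall>j\<in>C. 0 \<le> Q j \<and> Q j \<le> 1"
    and jstar: "jstar \<in> C" "\<forall>j\<in>C. j \<noteq> jstar \<longrightarrow> Q j < Q jstar"
    and tau: "tau \<ge> 1"
    and runs: "\<forall>mu\<in>set_pmf p. admissible_run c1 c2 c3 C Q tau mu"
  shows "\<bar>Q jstar - measure_pmf.expectation p (avg_value Q tau)\<bar>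
           \<le> (real (card C) - 1) * ((c1 / Delta_min C Q jstar) powr (1 / c2) + 1)
             / (real tau) powr (1 - c3 / c2)"
    (is "_ \<le> ?B")
proof -
  have "\<forall>mu\<in>set_pmf p. Q jstar - ?B \<le> avg_value Q tau mu \<and> avg_value Q tau mu \<le> Q jstar"
    using admissible_run_regret_bounds[OF _ c1 c23 finC b2 Qrange jstar tau] runs
    by fastforce
  then show ?thesis
    using pmf_expectation_between[of p "Q jstar - ?B" "avg_value Q tau" "Q jstar"] by linarith
qed

end
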